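(* In the monoid $M_n^+$ (defined in the context), with $\delta\equiv a_{n(n-1)}a_{(n-1)(n-2)}\cdots a_{21}$, the following positive equalities hold: $$a_{ts}\delta\doteq\delta a_{(t+1)(s+1)}\ \text{ and }\ b_{ts}\delta\doteq\delta b_{(t+1)(s+1)}\quad\text{for } 1\le s<t<n,$$ $$a_{ns}\delta\doteq\delta a_{(s+1)1}\ \text{ and }\ b_{ns}\delta\doteq\delta b_{(s+1)1}\quad\text{for } 1\le s<n.$$
   Context: Fix $n\ge 2$. Let $M_n^+$ be the monoid with generators $a_{ts}$ and $b_{ts}$ for $1\le s<t\le n$ and relations: $a_{ts}a_{rq}=a_{rq}a_{ts}$, $a_{ts}b_{rq}=b_{rq}a_{ts}$ and $b_{ts}b_{rq}=b_{rq}b_{ts}$ whenever $(t-r)(t-q)(s-r)(s-q)>0$; $a_{ts}a_{sr}=a_{tr}a_{ts}=a_{sr}a_{tr}$ for $1\le r<s<t\le n$; $a_{ts}b_{ts}=b_{ts}a_{ts}$ for $1\le s<t\le n$; $a_{ts}b_{sr}=b_{tr}a_{ts}$, $a_{sr}b_{tr}=b_{ts}a_{sr}$ and $a_{tr}b_{ts}=b_{sr}a_{tr}$ for $1\le r<s<t\le n$. (This is the positive singular braid monoid in Birman–Ko–Lee type generators.) For words $A,B$ in these generators, $A\doteq B$ means they represent the same element of $M_n^+$. *)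

theory Defs
  imports Main
begin

text \<open>Generators a_{ts} (A t s) and b_{ts} (B t s) of the positive singular braid
monoid M_n^+ in Birman-Ko-Lee type generators; valid when 1 \<le> s < t \<le> n.\<close>

datatype gen = A nat nat | B nat nat

type_synonym word = "gen list"

definition valid_idx :: "nat \<Rightarrow> nat \<Rightarrow> nat \<Rightarrow> bool" where
  "valid_idx n t s \<longleftrightarrow> 1 \<le> s \<and> s < t \<and> t \<le> n"

definition disjoint_cond :: "nat \<Rightarrow> nat \<Rightarrow> nat \<Rightarrow> nat \<Rightarrow> bool" where
  "disjoint_cond t s r q \<longleftrightarrow>
     (int t - int r) * (int t - int q) * (int s - int r) * (int s - int q) > 0"

inductive defrel :: "nat \<Rightarrow> word \<Rightarrow> word \<Rightarrow> bool" for n where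
  comm_aa: "\<lbrakk>valid_idx n t s; valid_idx n r q; disjoint_cond t s r q\<rbrakk>
      \<Longrightarrow> defrel n [A t s, A r q] [A r q, A t s]"
| comm_ab: "\<lbrakk>valid_idx n t s; valid_idx n r q; disjoint_cond t s r q\<rbrakk>
      \<Longrightarrow> defrel n [A t s, B r q] [B r q, A t s]"
| comm_bb: "\<lbrakk>valid_idx n t s; valid_idx n r q; disjoint_cond t s r q\<rbrakk>
      \<Longrightarrow> defrel n [B t s, B r q] [B r q, B t s]"
| tri1: "\<lbrakk>1 \<le> r; r < s; s < t; t \<le> n\<rbrakk>
      \<Longrightarrow> defrel n [A t s, A s r] [A t r, A t s]"
| tri2: "\<lbrakk>1 \<le> r; r < s; s < t; t \<le> n\<rbrakk>
      \<Longrightarrow> defrel n [A t r, A t s] [A s r, A t r]"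
| ab_same: "valid_idx n t s \<Longrightarrow> defrel n [A t s, B t s] [B t s, A t s]"
| mix1: "\<lbrakk>1 \<le> r; r < s; s < t; t \<le> n\<rbrakk>
      \<Longrightarrow> defrel n [A t s, B s r] [B t r, A t s]"
| mix2: "\<lbrakk>1 \<le> r; r < s; s < t; t \<le> n\<rbrakk>
      \<Longrightarrow> defrel n [A s r, B t r] [B t s, A s r]"
| mix3: "\<lbrakk>1 \<le> r; r < s; s < t; t \<le> n\<rbrakk>
      \<Longrightarrow> defrel n [A t r, B t s] [B s r, A t r]"

inductive peq :: "nat \<Rightarrow> word \<Rightarrow> word \<Rightarrow> bool" for n where
  base: "defrel n u v \<Longrightarrow> peq n u v"
| refl: "peq n u u"
| sym: "peq n u v \<Longrightarrow> peq n v u"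
| trans: "peq n u v \<Longrightarrow> peq n v w \<Longrightarrow> peq n u w"
| ctxt: "peq n u v \<Longrightarrow> peq n (x @ u @ y) (x @ v @ y)"

definition delta :: "nat \<Rightarrow> word" where
  "delta n = map (\<lambda>i. A (i + 1) i) (rev [1..<n])"

end

theory Submission
  imports Defs
begin

text \<open>Let x_ts stand for a_ts or b_ts, and cut \<delta> into the segments
\<delta>[k,j] = a_{k,k-1} \<cdots> a_{j+1,j} (the word delta_seg k j), so that \<delta> = \<delta>[n,1].
A generator whose strands lie outside [j,k] commutes with \<delta>[k,j], while the
three-strand relations let x_{T,k} (k < T) slide rightwards through \<delta>[k,j], becoming
x_{T,j}, and let x_{j,r} (r < j) slide leftwards, becoming x_{k,r}. For t < n the
generator x_ts commutes past \<delta>[n,t+1] and \<delta>[s,1]; inside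
\<delta>[t+1,s] \<doteq> a_{t+1,s} a_{t+1,t} \<delta>[t,s+1] it becomes x_{t+1,t} and then x_{t+1,s+1}.
For t = n one peels the last letter a_{s+1,1} off \<delta>[s+1,1] and combines both
sliding rules.\<close>

definition delta_seg :: "nat \<Rightarrow> nat \<Rightarrow> word" where
  "delta_seg k j = map (\<lambda>i. A (i + 1) i) (rev [j..<k])"

lemma delta_seg_same [simp]: "delta_seg j j = []"
  by (simp add: delta_seg_def)

lemma delta_seg_Suc: "j \<le> k \<Longrightarrow> delta_seg (Suc k) j = A (Suc k) k # delta_seg k j"
  by (simp add: delta_seg_def)

lemma delta_seg_append:
  assumes "j \<le> m" "m \<le> k"
  shows "delta_seg k j = delta_seg k m @ delta_seg m j"
proof -
  have "[j..<k] = [j..<m] @ [m..<k]"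
    using assms upt_add_eq_append[of j m "k - m"] by simp
  then show ?thesis by (simp add: delta_seg_def)
qed

lemma delta_seg_Suc_right:
  "j < k \<Longrightarrow> delta_seg k j = delta_seg k (Suc j) @ [A (Suc j) j]"
  using delta_seg_append[of j "Suc j" k] by (simp add: delta_seg_def)

lemma delta_eq_delta_seg: "delta n = delta_seg n 1"
  by (simp add: delta_def delta_seg_def)

declare peq.trans [trans]

lemma disjoint_cond_separated:
  assumes "s < t" "q < r" "t < q \<or> r < s"
  shows "disjoint_cond t s r q"
proof -
  have "(int t - int r) * (int t - int q) > 0" "(int s - int r) * (int s - int q) > 0"
    using assms by (auto intro: mult_pos_pos mult_neg_neg)
  then show ?thesis
    unfolding disjoint_cond_def by (metis mult.assoc mult_pos_pos)
qed

lemma peq_commute_separated: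
  assumes "X \<in> {A, B}" "valid_idx n t s" "valid_idx n r q" "t < q \<or> r < s"
  shows "peq n [X t s, A r q] [A r q, X t s]"
proof -
  have "disjoint_cond t s r q" "disjoint_cond r q t s"
    using assms(2-4) by (auto simp: valid_idx_def intro: disjoint_cond_separated)
  then show ?thesis
    using assms by (auto intro: peq.base peq.sym defrel.intros)
qed

lemma peq_X_ts_A_sr:
  assumes "X \<in> {A, B}" "1 \<le> r" "r < s" "s < t" "t \<le> n"
  shows "peq n [X t s, A s r] [A s r, X t r]"
proof -
  have "peq n [A t s, A s r] [A t r, A t s]" "peq n [A t r, A t s] [A s r, A t r]"
    "peq n [A s r, B t r] [B t s, A s r]"
    using assms(2-5) by (meson peq.base defrel.intros)+
  then show ?thesis
    using assms(1) by (blast intro: peq.trans peq.sym)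
qed

lemma peq_X_sr_A_tr:
  assumes "X \<in> {A, B}" "1 \<le> r" "r < s" "s < t" "t \<le> n"
  shows "peq n [X s r, A t r] [A t r, X t s]"
proof -
  have "peq n [A t r, A t s] [A s r, A t r]" "peq n [A t r, B t s] [B s r, A t r]"
    using assms(2-5) by (meson peq.base defrel.intros)+
  then show ?thesis
    using assms(1) by (blast intro: peq.sym)
qed

lemma peq_A_ts_X_sr:
  assumes "X \<in> {A, B}" "1 \<le> r" "r < s" "s < t" "t \<le> n"
  shows "peq n [A t s, X s r] [X t r, A t s]"
proof -
  have "peq n [A t s, A s r] [A t r, A t s]" "peq n [A t s, B s r] [B t r, A t s]"
    using assms(2-5) by (meson peq.base defrel.intros)+
  then show ?thesis
    using assms(1) by blast
qed

lemma peq_X_ts_A_ts: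
  assumes "X \<in> {A, B}" "valid_idx n t s"
  shows "peq n [X t s, A t s] [A t s, X t s]"
  using assms by (auto intro: peq.refl peq.sym peq.base defrel.ab_same)

lemma peq_commute_delta_seg:
  assumes "X \<in> {A, B}" "valid_idx n t s" "1 \<le> j" "j \<le> k" "k \<le> n" "t < j \<or> k < s"
  shows "peq n (X t s # delta_seg k j) (delta_seg k j @ [X t s])"
  using assms(4,5,6)
proof (induction k rule: dec_induct)
  case base
  then show ?case by (simp add: peq.refl)
next
  case (step m)
  have swap: "peq n [X t s, A (Suc m) m] [A (Suc m) m, X t s]"
    using step assms(1-3) by (intro peq_commute_separated) (auto simp: valid_idx_def)
  have "peq n (X t s # delta_seg (Suc m) j) (A (Suc m) m # X t s # delta_seg m j)"
    using peq.ctxt[OF swap, of "[]" "delta_seg m j"] step by (simp add: delta_seg_Suc)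
  also have "peq n \<dots> (A (Suc m) m # delta_seg m j @ [X t s])"
    using peq.ctxt[OF step.IH, of "[A (Suc m) m]" "[]"] step by auto
  finally show ?case
    using step by (simp add: delta_seg_Suc)
qed

lemma peq_X_top_delta_seg:
  assumes "X \<in> {A, B}" "1 \<le> j" "j \<le> k" "k < t" "t \<le> n"
  shows "peq n (X t k # delta_seg k j) (delta_seg k j @ [X t j])"
  using assms(3,4)
proof (induction k rule: dec_induct)
  case base
  then show ?case by (simp add: peq.refl)
next
  case (step m)
  have "peq n (X t (Suc m) # delta_seg (Suc m) j) (A (Suc m) m # X t m # delta_seg m j)"
    using peq.ctxt[OF peq_X_ts_A_sr[of X m "Suc m" t n], of "[]" "delta_seg m j"]
      assms step by (simp add: delta_seg_Suc)
  also have "peq n \<dots> (A (Suc m) m # delta_seg m j @ [X t j])"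
    using peq.ctxt[OF step.IH, of "[A (Suc m) m]" "[]"] step by simp
  finally show ?case
    using step by (simp add: delta_seg_Suc)
qed

lemma peq_delta_seg_X_bottom:
  assumes "X \<in> {A, B}" "1 \<le> r" "r < j" "j \<le> k" "k \<le> n"
  shows "peq n (delta_seg k j @ [X j r]) (X k r # delta_seg k j)"
  using assms(4,5)
proof (induction k rule: dec_induct)
  case base
  then show ?case by (simp add: peq.refl)
next
  case (step m)
  have "peq n (delta_seg (Suc m) j @ [X j r]) (A (Suc m) m # X m r # delta_seg m j)"
    using peq.ctxt[OF step.IH, of "[A (Suc m) m]" "[]"] step by (simp add: delta_seg_Suc)
  also have "peq n \<dots> (X (Suc m) r # A (Suc m) m # delta_seg m j)"
    using peq.ctxt[OF peq_A_ts_X_sr[of X r m "Suc m" n], of "[]" "delta_seg m j"]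
      assms step by simp
  finally show ?case
    using step by (simp add: delta_seg_Suc)
qed

lemma peq_delta_seg_first:
  assumes "1 \<le> j" "j < k" "k \<le> n"
  shows "peq n (delta_seg k j) (A k j # delta_seg k (Suc j))"
  using Suc_leI[OF assms(2)] assms(3)
proof (induction k rule: dec_induct)
  case base
  then show ?case by (simp add: delta_seg_Suc peq.refl)
next
  case (step m)
  have "peq n (delta_seg (Suc m) j) (A (Suc m) m # A m j # delta_seg m (Suc j))"
    using peq.ctxt[OF step.IH, of "[A (Suc m) m]" "[]"] step by (simp add: delta_seg_Suc)
  also have "peq n \<dots> (A (Suc m) j # A (Suc m) m # delta_seg m (Suc j))"
    using peq.ctxt[OF peq_A_ts_X_sr[of A j m "Suc m" n], of "[]" "delta_seg m (Suc j)"]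
      assms step by simp
  finally show ?case
    using step by (simp add: delta_seg_Suc)
qed

lemma peq_delta_seg_last:
  assumes "1 \<le> j" "j \<le> k" "k < n"
  shows "peq n (delta_seg (Suc k) j) (delta_seg k j @ [A (Suc k) j])"
  using assms(2,1)
proof (induction j rule: inc_induct)
  case base
  then show ?case by (simp add: delta_seg_Suc peq.refl)
next
  case (step i)
  have "peq n (delta_seg (Suc k) i)
      (delta_seg k (Suc i) @ [A (Suc k) (Suc i), A (Suc i) i])"
    using peq.ctxt[OF step.IH, of "[]" "[A (Suc i) i]"] step
    by (simp add: delta_seg_Suc_right)
  also have "peq n \<dots> (delta_seg k (Suc i) @ [A (Suc i) i, A (Suc k) i])"
    using peq.ctxt[OF peq_X_ts_A_sr[of A i "Suc i" "Suc k" n], of "delta_seg k (Suc i)" "[]"]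
      assms step by simp
  finally show ?case
    using step by (simp add: delta_seg_Suc_right)
qed

lemma peq_shift_delta_seg:
  assumes "X \<in> {A, B}" "1 \<le> s" "s < t" "t < n"
  shows "peq n (X t s # delta_seg (Suc t) s) (delta_seg (Suc t) s @ [X (Suc t) (Suc s)])"
proof -
  have first: "peq n (delta_seg (Suc t) s) (A (Suc t) s # A (Suc t) t # delta_seg t (Suc s))"
    using peq_delta_seg_first[of s "Suc t" n] assms by (simp add: delta_seg_Suc)
  have "peq n (X t s # delta_seg (Suc t) s)
      (X t s # A (Suc t) s # A (Suc t) t # delta_seg t (Suc s))"
    using peq.ctxt[OF first, of "[X t s]" "[]"] by simp
  also have "peq n \<dots> (A (Suc t) s # X (Suc t) t # A (Suc t) t # delta_seg t (Suc s))"
    using peq.ctxt[OF peq_X_sr_A_tr[of X s t "Suc t" n], of "[]"] assms by simp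
  also have "peq n \<dots> (A (Suc t) s # A (Suc t) t # X (Suc t) t # delta_seg t (Suc s))"
    using peq.ctxt[OF peq_X_ts_A_ts[of X n "Suc t" t], of "[A (Suc t) s]"] assms
    by (simp add: valid_idx_def)
  also have "peq n \<dots> (A (Suc t) s # A (Suc t) t # delta_seg t (Suc s) @ [X (Suc t) (Suc s)])"
    using peq.ctxt[OF peq_X_top_delta_seg[of X "Suc s" t "Suc t" n],
        of "[A (Suc t) s, A (Suc t) t]" "[]"] assms
    by simp
  also have "peq n \<dots> (delta_seg (Suc t) s @ [X (Suc t) (Suc s)])"
    using peq.ctxt[OF peq.sym[OF first], of "[]" "[X (Suc t) (Suc s)]"] by simp
  finally show ?thesis .
qed

lemma peq_shift_delta_inner:
  assumes "X \<in> {A, B}" "1 \<le> s" "s < t" "t < n"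
  shows "peq n (X t s # delta_seg n 1) (delta_seg n 1 @ [X (Suc t) (Suc s)])"
proof -
  have split: "delta_seg n 1 = delta_seg n (Suc t) @ delta_seg (Suc t) s @ delta_seg s 1"
    using assms delta_seg_append[of 1 s "Suc t"] delta_seg_append[of 1 "Suc t" n] by simp
  have "peq n (X t s # delta_seg n 1)
      (delta_seg n (Suc t) @ (X t s # delta_seg (Suc t) s) @ delta_seg s 1)"
    using peq.ctxt[OF peq_commute_delta_seg[of X n t s "Suc t" n], of "[]"] assms split
    by (simp add: valid_idx_def)
  also have "peq n \<dots>
      (delta_seg n (Suc t) @ (delta_seg (Suc t) s @ [X (Suc t) (Suc s)]) @ delta_seg s 1)"
    using peq.ctxt[OF peq_shift_delta_seg[of X s t n]] assms by simp
  also have "peq n \<dots> (delta_seg n 1 @ [X (Suc t) (Suc s)])"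
    using peq.ctxt[OF peq_commute_delta_seg[of X n "Suc t" "Suc s" 1 s],
        of "delta_seg n (Suc t) @ delta_seg (Suc t) s" "[]"] assms split
    by (simp add: valid_idx_def)
  finally show ?thesis .
qed

lemma peq_shift_delta_top:
  assumes "X \<in> {A, B}" "1 \<le> s" "s < n"
  shows "peq n (X n s # delta_seg n 1) (delta_seg n 1 @ [X (Suc s) 1])"
proof -
  have split: "delta_seg n 1 = delta_seg n (Suc s) @ delta_seg (Suc s) 1"
    using assms delta_seg_append[of 1 "Suc s" n] by simp
  have last: "peq n (delta_seg (Suc s) 1) (delta_seg s 1 @ [A (Suc s) 1])"
    using peq_delta_seg_last[of 1 s n] assms by simp
  have "peq n (X n s # delta_seg n 1) (delta_seg n (Suc s) @ [X (Suc s) s] @ delta_seg (Suc s) 1)"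
    using peq.ctxt[OF peq.sym[OF peq_delta_seg_X_bottom[of X s "Suc s" n n]], of "[]"] assms split
    by simp
  also have "peq n \<dots> (delta_seg n (Suc s) @ (X (Suc s) s # delta_seg s 1) @ [A (Suc s) 1])"
    using peq.ctxt[OF last, of "delta_seg n (Suc s) @ [X (Suc s) s]" "[]"] by simp
  also have "peq n \<dots> (delta_seg n (Suc s) @ delta_seg s 1 @ [X (Suc s) 1, A (Suc s) 1])"
    using peq.ctxt[OF peq_X_top_delta_seg[of X 1 s "Suc s" n],
        of "delta_seg n (Suc s)" "[A (Suc s) 1]"] assms
    by simp
  also have "peq n \<dots> (delta_seg n (Suc s) @ delta_seg s 1 @ [A (Suc s) 1, X (Suc s) 1])"
    using peq.ctxt[OF peq_X_ts_A_ts[of X n "Suc s" 1],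
        of "delta_seg n (Suc s) @ delta_seg s 1" "[]"] assms
    by (simp add: valid_idx_def)
  also have "peq n \<dots> (delta_seg n 1 @ [X (Suc s) 1])"
    using peq.ctxt[OF peq.sym[OF last], of "delta_seg n (Suc s)" "[X (Suc s) 1]"] split by simp
  finally show ?thesis .
qed

theorem proposition4p2:
  fixes n :: nat
  assumes "n \<ge> 2"
  shows "(\<forall>s t. 1 \<le> s \<and> s < t \<and> t < n \<longrightarrow>
            peq n (A t s # delta n) (delta n @ [A (t + 1) (s + 1)]) \<and>
            peq n (B t s # delta n) (delta n @ [B (t + 1) (s + 1)]))
       \<and> (\<forall>s. 1 \<le> s \<and> s < n \<longrightarrow>
            peq n (A n s # delta n) (delta n @ [A (s + 1) 1]) \<and>
            peq n (B n s # delta n) (delta n @ [B (s + 1) 1]))"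
  using peq_shift_delta_inner[of A] peq_shift_delta_inner[of B]
    peq_shift_delta_top[of A] peq_shift_delta_top[of B]
  by (simp add: delta_eq_delta_seg)

end
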